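(* Let $T_r$ be a resistive dyadic tree with resistances $r=(r_n^k)_{n\ge 1,\,0\le k\le 2^n-1}$ (notation in the context), and assume $$\sum_{n\geq 1} \frac{1}{2^n}\max_{0\le k\le 2^n-1} r_n^k < +\infty .$$ Then for every $p\in H^1(T_r)$ the sequence $(\tilde p_n)_{n\ge 0}$ converges strongly in $L^2(\mathbb{Z}_2)$ to some $\tilde p\in L^2(\mathbb{Z}_2)$, and the linear operator $\gamma_0: p\mapsto \tilde p$ is a bounded linear operator from $H^1(T_r)$ to $L^2(\mathbb{Z}_2)$.
   Context: The infinite dyadic tree $T$ has vertex set $V$ equal to the disjoint union over $n\ge 0$ of the sets $\mathbb{Z}/2^n\mathbb{Z}$; $x_n^k$ denotes $k\in\mathbb{Z}/2^n\mathbb{Z}$ ($0\le k\le 2^n-1$), the $k$-th vertex of generation $n$, and $x_0^0$ is the root. For $n<m$, $\varphi_n^m:\mathbb{Z}/2^m\mathbb{Z}\to\mathbb{Z}/2^n\mathbb{Z}$ is the canonical surjection. For $n\ge1$, the edge $e_n^k$ joins $x_n^k$ to its parent $\varphi_{n-1}^n(x_n^k)$, and these are all the edges. A resistive dyadic tree $T_r$ is $T$ together with positive numbers $r_n^k$ ($n\ge1$, $0\le k\le 2^n-1$), $r_n^k$ being the resistance of $e_n^k$. For $p:V\to\mathbb{R}$ set $$|p|_{H^1}^2=\sum_{n\ge1}\sum_{k=0}^{2^n-1}\frac{|p(x_n^k)-p(\varphi_{n-1}^n(x_n^k))|^2}{r_n^k},$$ and $H^1(T_r)=\{p:V\to\mathbb{R}: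 |p|_{H^1}<\infty\}$, normed by $\|p\|_{H^1(T_r)}^2=|p(x_0^0)|^2+|p|_{H^1}^2$. $\mathbb{Z}_2$ is the ring of 2-adic integers with 2-adic absolute value $|\cdot|_2$ and Haar probability measure $\mu$ (so $\mu(a+2^n\mathbb{Z}_2)=2^{-n}$); $L^2(\mathbb{Z}_2)$ is taken with respect to $\mu$. For $p:V\to\mathbb{R}$ and $n\ge0$, $\tilde p_n:\mathbb{Z}_2\to\mathbb{R}$ is defined by $\tilde p_n(x)=p(x_n^a)$, where $a\in\{0,\dots,2^n-1\}$ is the unique integer with $x\in a+2^n\mathbb{Z}_2$. *)

theory Defs
  imports "HOL-Probability.Probability"
begin

text \<open>Vertices of the dyadic tree: x_n^k is encoded by the pair (n,k), k < 2^n.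
  A function p on V is a map nat \<Rightarrow> nat \<Rightarrow> real, only values p n k with k < 2^n matter.
  The parent of x_n^k (n \<ge> 1) is x_(n-1)^(k mod 2^(n-1)).\<close>

definition H1_term :: "(nat \<Rightarrow> nat \<Rightarrow> real) \<Rightarrow> (nat \<Rightarrow> nat \<Rightarrow> real) \<Rightarrow> nat \<Rightarrow> real" where
  "H1_term r p n = (\<Sum>k<2^n. (p n k - p (n - 1) (k mod 2^(n - 1)))\<^sup>2 / r n k)"

definition in_H1 :: "(nat \<Rightarrow> nat \<Rightarrow> real) \<Rightarrow> (nat \<Rightarrow> nat \<Rightarrow> real) \<Rightarrow> bool" where
  "in_H1 r p \<longleftrightarrow> summable (\<lambda>n. H1_term r p (Suc n))"

definition H1_seminorm_sq :: "(nat \<Rightarrow> nat \<Rightarrow> real) \<Rightarrow> (nat \<Rightarrow> nat \<Rightarrow> real) \<Rightarrow> real" where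
  "H1_seminorm_sq r p = (\<Sum>n. H1_term r p (Suc n))"

definition H1_norm :: "(nat \<Rightarrow> nat \<Rightarrow> real) \<Rightarrow> (nat \<Rightarrow> nat \<Rightarrow> real) \<Rightarrow> real" where
  "H1_norm r p = sqrt ((p 0 0)\<^sup>2 + H1_seminorm_sq r p)"

text \<open>The 2-adic integers are modelled by their binary digit sequences
  x = \<Sum>_i x_i 2^i (x_i \<in> {0,1}, encoded as bool); the Haar probability measure
  corresponds to the product of fair coin measures on the digits.\<close>
type_synonym Z2 = "nat \<Rightarrow> bool"

definition haar_Z2 :: "Z2 measure" where
  "haar_Z2 = (\<Pi>\<^sub>M i\<in>(UNIV::nat set). measure_pmf (bernoulli_pmf (1/2)))"

text \<open>The unique a \<in> {0..2^n-1} with x \<in> a + 2^n Z_2.\<close>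
definition res :: "nat \<Rightarrow> Z2 \<Rightarrow> nat" where
  "res n x = (\<Sum>i<n. if x i then 2^i else 0)"

definition tilde :: "(nat \<Rightarrow> nat \<Rightarrow> real) \<Rightarrow> nat \<Rightarrow> Z2 \<Rightarrow> real" where
  "tilde p n x = p n (res n x)"

definition in_L2 :: "(Z2 \<Rightarrow> real) \<Rightarrow> bool" where
  "in_L2 f \<longleftrightarrow> f \<in> borel_measurable haar_Z2 \<and> integrable haar_Z2 (\<lambda>x. (f x)\<^sup>2)"

definition L2_norm :: "(Z2 \<Rightarrow> real) \<Rightarrow> real" where
  "L2_norm f = sqrt (\<integral>x. (f x)\<^sup>2 \<partial>haar_Z2)"

definition L2_converges :: "(nat \<Rightarrow> Z2 \<Rightarrow> real) \<Rightarrow> (Z2 \<Rightarrow> real) \<Rightarrow> bool" where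
  "L2_converges fs f \<longleftrightarrow> (\<lambda>n. L2_norm (\<lambda>x. fs n x - f x)) \<longlonglongrightarrow> 0"

text \<open>The trace operator gamma_0 (a chosen representative of the L^2 limit).\<close>
definition gamma0 :: "(nat \<Rightarrow> nat \<Rightarrow> real) \<Rightarrow> Z2 \<Rightarrow> real" where
  "gamma0 p = (SOME f. in_L2 f \<and> L2_converges (tilde p) f)"

end

theory Submission
  imports Defs
begin

text \<open>
  The increment d_n = p~_(n+1) - p~_n is constant on the cylinders of generation n+1, so
  \<integral> d_n^2 = 2^-(n+1) \<Sum>_k (p(x_(n+1)^k) - p(parent))^2 is at most a_n times the generation-(n+1)
  term of |p|^2_H1, where a_n = 2^-(n+1) max_k r_(n+1)^k. Pointwise, the weighted Cauchy-Schwarz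
  inequality bounds the tail of the telescoping series,
  |\<Sum>_(n\<ge>N) d_n|^2 \<le> (\<Sum>_(n\<ge>N) a_n) G  with  G = \<Sum>_n d_n^2 / a_n,  \<integral> G \<le> |p|^2_H1.
  Hence p~_n converges almost everywhere and in L^2, with squared error at most
  (\<Sum>_(n\<ge>N) a_n) |p|^2_H1, and the limit satisfies |p~|^2_L2 \<le> 2 p(x_0^0)^2 + 2 (\<Sum>_n a_n) |p|^2_H1.
  Linearity of gamma_0 up to null sets follows from uniqueness of L^2 limits.
\<close>

lemma res_eq_horner_sum: "res n x = horner_sum of_bool 2 (map x [0..<n])"
  by (simp add: res_def horner_sum_eq_sum atLeast0LessThan sum.If_cases)

lemma bit_res_iff: "bit (res n x) i \<longleftrightarrow> i < n \<and> x i"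
  by (auto simp: res_eq_horner_sum bit_horner_sum_bit_iff)

lemma take_bit_res: "take_bit m (res n x) = res (min m n) x"
  by (rule bit_eq_iff[THEN iffD2]) (auto simp: bit_take_bit_iff bit_res_iff)

lemma res_less: "res n x < 2^n"
  using take_bit_res[of n n x] by (metis min.idem take_bit_nat_less_exp)

lemma res_Suc_mod: "res (Suc n) x mod 2^n = res n x"
  using take_bit_res[of n "Suc n" x] by (simp add: take_bit_eq_mod)

lemma res_eq_iff:
  assumes "k < 2^n"
  shows "res n x = k \<longleftrightarrow> (\<forall>i<n. x i = bit k i)"
proof -
  have "\<not> bit k i" if "n \<le> i" for i
    using assms that by (metis bit_take_bit_iff linorder_not_le take_bit_nat_eq_self)
  then show ?thesis
    by (auto simp: bit_eq_iff[of "res n x" k] bit_res_iff) (metis not_le)+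
qed

interpretation Z: product_prob_space "\<lambda>_::nat. measure_pmf (bernoulli_pmf (1/2))" UNIV
  by unfold_locales

lemma prob_space_haar_Z2: "prob_space haar_Z2"
  unfolding haar_Z2_def by (rule Z.P.prob_space_axioms)

lemma space_haar_Z2: "space haar_Z2 = UNIV"
  unfolding haar_Z2_def by (simp add: space_PiM)

lemma measurable_digit [measurable]: "(\<lambda>x. x i) \<in> haar_Z2 \<rightarrow>\<^sub>M count_space UNIV"
proof -
  have "(\<lambda>x. x i) \<in> haar_Z2 \<rightarrow>\<^sub>M measure_pmf (bernoulli_pmf (1/2))"
    unfolding haar_Z2_def by (rule measurable_component_singleton) simp
  moreover have "sets (measure_pmf (bernoulli_pmf (1/2))) = sets (count_space (UNIV::bool set))"
    by simp
  ultimately show ?thesis using measurable_cong_sets[OF refl] by blast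
qed

lemma res_cylinder_eq:
  assumes "k < 2^n"
  shows "{x \<in> space haar_Z2. res n x = k} = {x \<in> space haar_Z2. \<forall>i\<in>{..<n}. x i = bit k i}"
  using res_eq_iff[OF assms] by auto

lemma sets_res_eq [measurable]: "{x \<in> space haar_Z2. res n x = k} \<in> sets haar_Z2"
proof (cases "k < 2^n")
  case True
  then show ?thesis unfolding res_cylinder_eq[OF True] by measurable
next
  case False
  then have "{x \<in> space haar_Z2. res n x = k} = {}"
    using res_less[of n] by auto
  then show ?thesis by (metis sets.empty_sets)
qed

lemma measure_res_eq:
  assumes "k < 2^n"
  shows "measure haar_Z2 {x \<in> space haar_Z2. res n x = k} = 1 / 2^n"
proof -
  have "emeasure haar_Z2 {x \<in> space haar_Z2. \<forall>i\<in>{..<n}. x i \<in> {bit k i}}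
      = (\<Prod>i<n. emeasure (measure_pmf (bernoulli_pmf (1/2))) {bit k i})"
    unfolding haar_Z2_def by (rule Z.emeasure_PiM_Collect) auto
  also have "\<dots> = ennreal (1/2) ^ n"
    by (simp add: emeasure_pmf_single)
  also have "\<dots> = ennreal (1 / 2^n)"
    by (subst ennreal_power) (simp_all add: power_one_over)
  finally show ?thesis
    by (simp add: measure_def res_cylinder_eq[OF assms])
qed

lemma measurable_res [measurable]: "res n \<in> haar_Z2 \<rightarrow>\<^sub>M count_space UNIV"
proof (rule measurable_count_space_eq2_countable[THEN iffD2], intro conjI ballI)
  fix k
  have "res n -` {k} \<inter> space haar_Z2 = {x \<in> space haar_Z2. res n x = k}" by auto
  then show "res n -` {k} \<inter> space haar_Z2 \<in> sets haar_Z2" using sets_res_eq by (simp only:)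
qed simp

lemma measurable_comp_res [measurable]: "(\<lambda>x. g (res n x)) \<in> borel_measurable haar_Z2"
  by (rule measurable_compose[OF measurable_res]) simp

lemma integrable_comp_res: "integrable haar_Z2 (\<lambda>x. g (res n x) :: real)"
proof -
  interpret prob_space haar_Z2 by (rule prob_space_haar_Z2)
  show ?thesis
  proof (rule integrable_const_bound[where B="\<Sum>k<2^n. \<bar>g k\<bar>"])
    show "AE x in haar_Z2. norm (g (res n x)) \<le> (\<Sum>k<2^n. \<bar>g k\<bar>)"
      using res_less[of n] by (auto intro!: member_le_sum[where f="\<lambda>k. \<bar>g k\<bar>"])
  qed simp
qed

lemma integral_comp_res: "(\<integral>x. g (res n x) \<partial>haar_Z2) = (\<Sum>k<2^n. g k :: real) / 2^n"
proof -
  interpret prob_space haar_Z2 by (rule prob_space_haar_Z2)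
  define S where "S k = {x \<in> space haar_Z2. res n x = k}" for k
  have "(\<Sum>k<2^n. g k * indicator (S k) x) = (\<Sum>k\<in>{res n x}. g k)" for x
    using res_less[of n x]
    by (intro sum.mono_neutral_cong_right) (auto simp: S_def space_haar_Z2 indicator_def)
  then have "(\<integral>x. g (res n x) \<partial>haar_Z2) = (\<integral>x. (\<Sum>k<2^n. g k * indicator (S k) x) \<partial>haar_Z2)"
    by simp
  also have "\<dots> = (\<Sum>k<2^n. (\<integral>x. g k * indicator (S k) x \<partial>haar_Z2))"
    by (intro Bochner_Integration.integral_sum integrable_mult_right integrable_real_indicator)
      (auto simp: S_def emeasure_eq_measure)
  also have "\<dots> = (\<Sum>k<2^n. g k * measure haar_Z2 (S k))"
    by (simp add: S_def)
  also have "\<dots> = (\<Sum>k<2^n. g k / 2^n)"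
    by (intro sum.cong) (auto simp: measure_res_eq S_def)
  finally show ?thesis by (simp add: sum_divide_distrib)
qed

lemma sq_lincomb_le: "(a * u + b * v :: real)\<^sup>2 \<le> 2 * a\<^sup>2 * u\<^sup>2 + 2 * b\<^sup>2 * v\<^sup>2"
proof -
  have "0 \<le> (a * u - b * v)\<^sup>2" by simp
  then show ?thesis by (simp add: power2_eq_square algebra_simps)
qed

lemma
  assumes f: "in_L2 f" and g: "in_L2 g"
  shows in_L2_lincomb: "in_L2 (\<lambda>x. a * f x + b * g x)"
    and integral_sq_lincomb_le: "(\<integral>x. (a * f x + b * g x)\<^sup>2 \<partial>haar_Z2)
      \<le> 2 * a\<^sup>2 * (\<integral>x. (f x)\<^sup>2 \<partial>haar_Z2) + 2 * b\<^sup>2 * (\<integral>x. (g x)\<^sup>2 \<partial>haar_Z2)"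
proof -
  have [measurable]: "f \<in> borel_measurable haar_Z2" "g \<in> borel_measurable haar_Z2"
    using f g by (auto simp: in_L2_def)
  have bound_int: "integrable haar_Z2 (\<lambda>x. 2 * a\<^sup>2 * (f x)\<^sup>2 + 2 * b\<^sup>2 * (g x)\<^sup>2)"
    using f g by (auto simp: in_L2_def)
  have int: "integrable haar_Z2 (\<lambda>x. (a * f x + b * g x)\<^sup>2)"
    by (rule Bochner_Integration.integrable_bound[OF bound_int]) (auto intro!: AE_I2 sq_lincomb_le)
  then show "in_L2 (\<lambda>x. a * f x + b * g x)" by (simp add: in_L2_def)
  have "(\<integral>x. (a * f x + b * g x)\<^sup>2 \<partial>haar_Z2) \<le> (\<integral>x. 2 * a\<^sup>2 * (f x)\<^sup>2 + 2 * b\<^sup>2 * (g x)\<^sup>2 \<partial>haar_Z2)"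
    by (rule integral_mono[OF int bound_int sq_lincomb_le])
  then show "(\<integral>x. (a * f x + b * g x)\<^sup>2 \<partial>haar_Z2)
      \<le> 2 * a\<^sup>2 * (\<integral>x. (f x)\<^sup>2 \<partial>haar_Z2) + 2 * b\<^sup>2 * (\<integral>x. (g x)\<^sup>2 \<partial>haar_Z2)"
    using f g by (simp add: in_L2_def)
qed

lemma L2_converges_iff_integral:
  "L2_converges fs f \<longleftrightarrow> (\<lambda>n. \<integral>x. (fs n x - f x)\<^sup>2 \<partial>haar_Z2) \<longlonglongrightarrow> 0"
proof
  assume "L2_converges fs f"
  then have "(\<lambda>n. (sqrt (\<integral>x. (fs n x - f x)\<^sup>2 \<partial>haar_Z2))\<^sup>2) \<longlonglongrightarrow> 0\<^sup>2"
    unfolding L2_converges_def L2_norm_def by (rule tendsto_power)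
  moreover have "0 \<le> (\<integral>x. (fs n x - f x)\<^sup>2 \<partial>haar_Z2)" for n
    by (rule integral_nonneg_AE) simp
  ultimately show "(\<lambda>n. \<integral>x. (fs n x - f x)\<^sup>2 \<partial>haar_Z2) \<longlonglongrightarrow> 0"
    by simp
next
  assume "(\<lambda>n. \<integral>x. (fs n x - f x)\<^sup>2 \<partial>haar_Z2) \<longlonglongrightarrow> 0"
  then have "(\<lambda>n. sqrt (\<integral>x. (fs n x - f x)\<^sup>2 \<partial>haar_Z2)) \<longlonglongrightarrow> sqrt 0"
    by (rule tendsto_real_sqrt)
  then show "L2_converges fs f"
    unfolding L2_converges_def L2_norm_def by simp
qed

lemma L2_converges_lincomb:
  assumes fs: "\<And>n. in_L2 (fs n)" and gs: "\<And>n. in_L2 (gs n)" and f: "in_L2 f" and g: "in_L2 g"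
    and fs_f: "L2_converges fs f" and gs_g: "L2_converges gs g"
  shows "L2_converges (\<lambda>n x. a * fs n x + b * gs n x) (\<lambda>x. a * f x + b * g x)"
  unfolding L2_converges_iff_integral
proof (rule tendsto_sandwich[OF _ _ tendsto_const])
  define e where "e n = 2 * a\<^sup>2 * (\<integral>x. (fs n x - f x)\<^sup>2 \<partial>haar_Z2) + 2 * b\<^sup>2 * (\<integral>x. (gs n x - g x)\<^sup>2 \<partial>haar_Z2)" for n
  have "(\<integral>x. (a * fs n x + b * gs n x - (a * f x + b * g x))\<^sup>2 \<partial>haar_Z2) \<le> e n" for n
  proof -
    have "in_L2 (\<lambda>x. fs n x - f x)" "in_L2 (\<lambda>x. gs n x - g x)"
      using in_L2_lincomb[OF fs f, of 1 n "-1"] in_L2_lincomb[OF gs g, of 1 n "-1"] by simp_all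
    from integral_sq_lincomb_le[OF this, of a b] show ?thesis
      unfolding e_def by (simp add: algebra_simps)
  qed
  then show "\<forall>\<^sub>F n in sequentially. (\<integral>x. (a * fs n x + b * gs n x - (a * f x + b * g x))\<^sup>2 \<partial>haar_Z2) \<le> e n"
    by simp
  show "\<forall>\<^sub>F n in sequentially. 0 \<le> (\<integral>x. (a * fs n x + b * gs n x - (a * f x + b * g x))\<^sup>2 \<partial>haar_Z2)"
    by (simp add: integral_nonneg_AE)
  have "(\<lambda>n. \<integral>x. (fs n x - f x)\<^sup>2 \<partial>haar_Z2) \<longlonglongrightarrow> 0" "(\<lambda>n. \<integral>x. (gs n x - g x)\<^sup>2 \<partial>haar_Z2) \<longlonglongrightarrow> 0"
    using fs_f gs_g by (simp_all add: L2_converges_iff_integral)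
  then show "e \<longlonglongrightarrow> 0"
    unfolding e_def by (intro tendsto_add_zero tendsto_mult_right_zero)
qed

lemma L2_limit_unique_AE:
  assumes fs: "\<And>n. in_L2 (fs n)" and f: "in_L2 f" and g: "in_L2 g"
    and "L2_converges fs f" and "L2_converges fs g"
  shows "AE x in haar_Z2. f x = g x"
proof -
  have "L2_converges (\<lambda>n x. 1 * fs n x + (-1) * fs n x) (\<lambda>x. 1 * f x + (-1) * g x)"
    by (rule L2_converges_lincomb[OF fs fs f g assms(4,5)])
  then have "(\<lambda>n. \<integral>x. (f x - g x)\<^sup>2 \<partial>haar_Z2) \<longlonglongrightarrow> 0"
    by (simp add: L2_converges_iff_integral power2_commute)
  then have "(\<integral>x. (f x - g x)\<^sup>2 \<partial>haar_Z2) = 0"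
    by (simp add: LIMSEQ_const_iff)
  moreover have "integrable haar_Z2 (\<lambda>x. (f x - g x)\<^sup>2)"
    using in_L2_lincomb[OF f g, of 1 "-1"] by (simp add: in_L2_def)
  ultimately have "AE x in haar_Z2. (f x - g x)\<^sup>2 = 0"
    by (simp add: integral_nonneg_eq_0_iff_AE)
  then show ?thesis by eventually_elim simp
qed

lemma weighted_Cauchy_Schwarz_suminf:
  fixes a d :: "nat \<Rightarrow> real"
  assumes a_pos: "\<And>n. 0 < a n" and sa: "summable a" and sw: "summable (\<lambda>n. (d n)\<^sup>2 / a n)"
  shows "summable d" and "(\<Sum>n. d n)\<^sup>2 \<le> (\<Sum>n. a n) * (\<Sum>n. (d n)\<^sup>2 / a n)"
proof -
  have "\<bar>d n\<bar> \<le> a n + (d n)\<^sup>2 / a n" for n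
  proof -
    have "0 \<le> (\<bar>d n\<bar> - a n)\<^sup>2" by simp
    then have "2 * (a n * \<bar>d n\<bar>) \<le> (a n)\<^sup>2 + (d n)\<^sup>2"
      by (simp add: power2_eq_square algebra_simps)
    moreover have "0 \<le> a n * \<bar>d n\<bar>"
      using a_pos[of n] by simp
    ultimately have "a n * \<bar>d n\<bar> \<le> (a n)\<^sup>2 + (d n)\<^sup>2"
      by linarith
    then have "\<bar>d n\<bar> \<le> ((a n)\<^sup>2 + (d n)\<^sup>2) / a n"
      using a_pos[of n] by (simp add: pos_le_divide_eq mult.commute)
    then show ?thesis
      using a_pos[of n] by (simp add: power2_eq_square add_divide_distrib)
  qed
  then show sd: "summable d"
    by (intro summable_comparison_test'[OF summable_add[OF sa sw]]) auto
  have "(\<Sum>i<N. d i)\<^sup>2 \<le> (\<Sum>n. a n) * (\<Sum>n. (d n)\<^sup>2 / a n)" for N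
  proof -
    have sqrt_a: "sqrt (a i) * (d i / sqrt (a i)) = d i" "(sqrt (a i))\<^sup>2 = a i"
      "(d i / sqrt (a i))\<^sup>2 = (d i)\<^sup>2 / a i" for i
      using a_pos[of i] by (simp_all add: power_divide)
    have "(\<Sum>i<N. d i)\<^sup>2 = (\<Sum>i<N. sqrt (a i) * (d i / sqrt (a i)))\<^sup>2"
      by (simp only: sqrt_a)
    also have "\<dots> \<le> (\<Sum>i<N. (sqrt (a i))\<^sup>2) * (\<Sum>i<N. (d i / sqrt (a i))\<^sup>2)"
      by (rule Cauchy_Schwarz_ineq_sum)
    also have "\<dots> = (\<Sum>i<N. a i) * (\<Sum>i<N. (d i)\<^sup>2 / a i)"
      by (simp only: sqrt_a)
    also have "\<dots> \<le> (\<Sum>n. a n) * (\<Sum>n. (d n)\<^sup>2 / a n)"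
      using a_pos sa sw
      by (intro mult_mono sum_le_suminf sum_nonneg suminf_nonneg) (auto simp: less_imp_le)
    finally show ?thesis .
  qed
  moreover have "(\<lambda>N. (\<Sum>i<N. d i)\<^sup>2) \<longlonglongrightarrow> (\<Sum>n. d n)\<^sup>2"
    by (intro tendsto_power summable_LIMSEQ sd)
  ultimately show "(\<Sum>n. d n)\<^sup>2 \<le> (\<Sum>n. a n) * (\<Sum>n. (d n)\<^sup>2 / a n)"
    by (intro LIMSEQ_le_const2) auto
qed

lemma telescoping_tail_sq_le:
  fixes s a :: "nat \<Rightarrow> real"
  assumes a_pos: "\<And>n. 0 < a n" and sa: "summable a"
    and sw: "summable (\<lambda>n. (s (Suc n) - s n)\<^sup>2 / a n)"
  shows "(s 0 + (\<Sum>n. s (Suc n) - s n) - s N)\<^sup>2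
    \<le> (\<Sum>n. a (n + N)) * (\<Sum>n. (s (Suc n) - s n)\<^sup>2 / a n)"
proof -
  define d where "d n = s (Suc n) - s n" for n
  have sd: "summable d"
    unfolding d_def by (rule weighted_Cauchy_Schwarz_suminf(1)[OF a_pos sa sw])
  have "(\<Sum>i<N. d i) = s N - s 0"
    unfolding d_def by (rule sum_lessThan_telescope)
  then have "(\<Sum>n. d n) = (\<Sum>n. d (n + N)) + (s N - s 0)"
    using suminf_split_initial_segment[OF sd, of N] by simp
  then have "s 0 + (\<Sum>n. d n) - s N = (\<Sum>n. d (n + N))"
    by simp
  moreover have "(\<Sum>n. d (n + N))\<^sup>2 \<le> (\<Sum>n. a (n + N)) * (\<Sum>n. (d (n + N))\<^sup>2 / a (n + N))"
    using sa sw unfolding d_def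
    by (intro weighted_Cauchy_Schwarz_suminf(2) a_pos summable_ignore_initial_segment)
  moreover have "(\<Sum>n. (d (n + N))\<^sup>2 / a (n + N)) \<le> (\<Sum>n. (d n)\<^sup>2 / a n)"
    using suminf_minus_initial_segment[OF sw[folded d_def], of N] a_pos
    by (simp add: less_imp_le sum_nonneg)
  moreover have "0 \<le> (\<Sum>n. a (n + N))"
    using a_pos sa by (intro suminf_nonneg summable_ignore_initial_segment less_imp_le)
  ultimately show ?thesis
    unfolding d_def by (metis (no_types, lifting) mult_left_mono order_trans)
qed

lemma
  fixes w :: "nat \<Rightarrow> 'a \<Rightarrow> real"
  assumes w_int: "\<And>n. integrable M (w n)" and w_nonneg: "\<And>n x. 0 \<le> w n x"
    and summable_int: "summable (\<lambda>n. \<integral>x. w n x \<partial>M)"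
  shows AE_summable_of_summable_integral: "AE x in M. summable (\<lambda>n. w n x)"
    and integrable_suminf_nonneg: "integrable M (\<lambda>x. \<Sum>n. w n x)"
    and integral_suminf_nonneg: "(\<integral>x. (\<Sum>n. w n x) \<partial>M) = (\<Sum>n. \<integral>x. w n x \<partial>M)"
proof -
  have [measurable]: "\<And>n. w n \<in> borel_measurable M"
    using w_int by auto
  have "(\<integral>\<^sup>+x. (\<Sum>n. ennreal (w n x)) \<partial>M) = (\<Sum>n. \<integral>\<^sup>+x. ennreal (w n x) \<partial>M)"
    by (rule nn_integral_suminf) measurable
  also have "\<dots> = (\<Sum>n. ennreal (\<integral>x. w n x \<partial>M))"
    by (intro arg_cong[where f=suminf] ext nn_integral_eq_integral w_int) (simp add: w_nonneg)
  also have "\<dots> = ennreal (\<Sum>n. \<integral>x. w n x \<partial>M)"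
    using w_nonneg by (intro suminf_ennreal2 summable_int integral_nonneg_AE) auto
  finally have "(\<integral>\<^sup>+x. (\<Sum>n. ennreal (w n x)) \<partial>M) \<noteq> \<infinity>"
    by simp
  then have "AE x in M. (\<Sum>n. ennreal (w n x)) \<noteq> \<infinity>"
    by (intro nn_integral_PInf_AE) measurable
  then show summable: "AE x in M. summable (\<lambda>n. w n x)"
    by eventually_elim (rule summable_suminf_not_top, simp_all add: w_nonneg)
  have abs_w: "\<bar>w n x\<bar> = w n x" for n x
    using w_nonneg[of n x] by simp
  show "integrable M (\<lambda>x. \<Sum>n. w n x)"
    by (rule integrable_suminf) (simp_all add: abs_w summable w_int summable_int)
  show "(\<integral>x. (\<Sum>n. w n x) \<partial>M) = (\<Sum>n. \<integral>x. w n x \<partial>M)"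
    by (rule integral_suminf) (simp_all add: abs_w summable w_int summable_int)
qed

lemma in_L2_of_AE_sq_le:
  assumes [measurable]: "g \<in> borel_measurable haar_Z2" and G: "integrable haar_Z2 G"
    and le: "AE x in haar_Z2. (g x)\<^sup>2 \<le> c * G x"
  shows "in_L2 g" and "(\<integral>x. (g x)\<^sup>2 \<partial>haar_Z2) \<le> c * (\<integral>x. G x \<partial>haar_Z2)"
proof -
  have cG: "integrable haar_Z2 (\<lambda>x. c * G x)"
    using G by simp
  have g2: "integrable haar_Z2 (\<lambda>x. (g x)\<^sup>2)"
    by (rule Bochner_Integration.integrable_bound[OF cG]) (use le in \<open>auto elim!: AE_mp\<close>)
  then show "in_L2 g"
    by (simp add: in_L2_def)
  have "(\<integral>x. (g x)\<^sup>2 \<partial>haar_Z2) \<le> (\<integral>x. c * G x \<partial>haar_Z2)"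
    by (rule integral_mono_AE[OF g2 cG le])
  then show "(\<integral>x. (g x)\<^sup>2 \<partial>haar_Z2) \<le> c * (\<integral>x. G x \<partial>haar_Z2)"
    by simp
qed

lemma
  fixes fs :: "nat \<Rightarrow> 'a \<Rightarrow> real" and a h :: "nat \<Rightarrow> real"
  assumes increment_int: "\<And>n. integrable M (\<lambda>x. (fs (Suc n) x - fs n x)\<^sup>2)"
    and a_pos: "\<And>n. 0 < a n"
    and increment_le: "\<And>n. (\<integral>x. (fs (Suc n) x - fs n x)\<^sup>2 \<partial>M) \<le> a n * h n"
    and sh: "summable h"
  shows AE_summable_weighted_increments: "AE x in M. summable (\<lambda>n. (fs (Suc n) x - fs n x)\<^sup>2 / a n)"
    and integrable_weighted_increments: "integrable M (\<lambda>x. \<Sum>n. (fs (Suc n) x - fs n x)\<^sup>2 / a n)"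
    and integral_weighted_increments_le: "(\<integral>x. (\<Sum>n. (fs (Suc n) x - fs n x)\<^sup>2 / a n) \<partial>M) \<le> (\<Sum>n. h n)"
proof -
  define w where "w n x = (fs (Suc n) x - fs n x)\<^sup>2 / a n" for n x
  have w_nonneg: "0 \<le> w n x" for n x
    using a_pos[of n] by (simp add: w_def)
  have w_int: "integrable M (w n)" for n
    using increment_int[of n] by (simp add: w_def[abs_def])
  have w_le: "(\<integral>x. w n x \<partial>M) \<le> h n" for n
    using increment_le[of n] a_pos[of n] by (simp add: w_def pos_divide_le_eq mult.commute)
  have summable_w: "summable (\<lambda>n. \<integral>x. w n x \<partial>M)"
    by (rule summable_comparison_test'[OF sh]) (use w_le w_nonneg in \<open>simp add: integral_nonneg_AE\<close>)
  show "AE x in M. summable (\<lambda>n. (fs (Suc n) x - fs n x)\<^sup>2 / a n)"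
    using AE_summable_of_summable_integral[OF w_int w_nonneg summable_w] by (simp add: w_def)
  show "integrable M (\<lambda>x. \<Sum>n. (fs (Suc n) x - fs n x)\<^sup>2 / a n)"
    using integrable_suminf_nonneg[OF w_int w_nonneg summable_w] by (simp add: w_def)
  have "(\<integral>x. (\<Sum>n. w n x) \<partial>M) \<le> (\<Sum>n. h n)"
    unfolding integral_suminf_nonneg[OF w_int w_nonneg summable_w]
    by (rule suminf_le[OF w_le summable_w sh])
  then show "(\<integral>x. (\<Sum>n. (fs (Suc n) x - fs n x)\<^sup>2 / a n) \<partial>M) \<le> (\<Sum>n. h n)"
    by (simp add: w_def)
qed

lemma ex_L2_limit_of_weighted_increments:
  fixes fs :: "nat \<Rightarrow> Z2 \<Rightarrow> real" and a h :: "nat \<Rightarrow> real"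
  assumes fs: "\<And>n. in_L2 (fs n)" and a_pos: "\<And>n. 0 < a n" and sa: "summable a"
    and increment_le: "\<And>n. (\<integral>x. (fs (Suc n) x - fs n x)\<^sup>2 \<partial>haar_Z2) \<le> a n * h n"
    and sh: "summable h"
  shows "\<exists>f. in_L2 f \<and> L2_converges fs f \<and>
    (\<integral>x. (f x)\<^sup>2 \<partial>haar_Z2) \<le> 2 * (\<integral>x. (fs 0 x)\<^sup>2 \<partial>haar_Z2) + 2 * (\<Sum>n. a n) * (\<Sum>n. h n)"
proof -
  have [measurable]: "\<And>n. fs n \<in> borel_measurable haar_Z2"
    using fs by (simp add: in_L2_def)
  have "integrable haar_Z2 (\<lambda>x. (fs (Suc n) x - fs n x)\<^sup>2)" for n
    using in_L2_lincomb[OF fs fs, of 1 "Suc n" "-1" n] by (simp add: in_L2_def)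
  note weighted_increments = AE_summable_weighted_increments[OF this a_pos increment_le sh]
    integrable_weighted_increments[OF this a_pos increment_le sh]
    integral_weighted_increments_le[OF this a_pos increment_le sh]
  define G where "G x = (\<Sum>n. (fs (Suc n) x - fs n x)\<^sup>2 / a n)" for x
  define T where "T N = (\<Sum>n. a (n + N))" for N
  define f where "f x = fs 0 x + (\<Sum>n. fs (Suc n) x - fs n x)" for x
  have f_meas [measurable]: "f \<in> borel_measurable haar_Z2"
    unfolding f_def[abs_def] by measurable
  have "AE x in haar_Z2. (f x - fs N x)\<^sup>2 \<le> T N * G x" for N
    using weighted_increments(1) unfolding f_def T_def G_def
    by eventually_elim (rule telescoping_tail_sq_le[OF a_pos sa])
  from in_L2_of_AE_sq_le[OF _ weighted_increments(2)[folded G_def] this]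
  have tail_L2: "in_L2 (\<lambda>x. f x - fs N x)"
    and tail_int: "(\<integral>x. (f x - fs N x)\<^sup>2 \<partial>haar_Z2) \<le> T N * (\<integral>x. G x \<partial>haar_Z2)" for N
    by simp_all
  have T_lim: "(\<lambda>N. T N * (\<integral>x. G x \<partial>haar_Z2)) \<longlonglongrightarrow> 0"
    unfolding T_def by (intro tendsto_mult_left_zero suminf_exist_split2 sa)
  have "L2_converges fs f"
    unfolding L2_converges_iff_integral
  proof (rule tendsto_sandwich[OF _ _ tendsto_const T_lim])
    show "\<forall>\<^sub>F N in sequentially. 0 \<le> (\<integral>x. (fs N x - f x)\<^sup>2 \<partial>haar_Z2)"
      by (simp add: integral_nonneg_AE)
    show "\<forall>\<^sub>F N in sequentially. (\<integral>x. (fs N x - f x)\<^sup>2 \<partial>haar_Z2) \<le> T N * (\<integral>x. G x \<partial>haar_Z2)"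
      using tail_int by (simp add: power2_commute)
  qed
  moreover have "in_L2 f"
    using in_L2_lincomb[OF fs tail_L2, of 1 0 1 0] by simp
  moreover have "(\<integral>x. (f x)\<^sup>2 \<partial>haar_Z2) \<le> 2 * (\<integral>x. (fs 0 x)\<^sup>2 \<partial>haar_Z2) + 2 * (\<Sum>n. a n) * (\<Sum>n. h n)"
  proof -
    have "0 \<le> T 0"
      unfolding T_def using sa a_pos by (simp add: suminf_nonneg less_imp_le)
    from mult_left_mono[OF weighted_increments(3)[folded G_def] this]
    have "(\<integral>x. (f x - fs 0 x)\<^sup>2 \<partial>haar_Z2) \<le> T 0 * (\<Sum>n. h n)"
      using tail_int[of 0] by simp
    moreover have "(\<integral>x. (f x)\<^sup>2 \<partial>haar_Z2)
        \<le> 2 * (\<integral>x. (fs 0 x)\<^sup>2 \<partial>haar_Z2) + 2 * (\<integral>x. (f x - fs 0 x)\<^sup>2 \<partial>haar_Z2)"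
      using integral_sq_lincomb_le[OF fs tail_L2, of 1 0 1 0] by simp
    ultimately show ?thesis
      by (simp add: T_def)
  qed
  ultimately show ?thesis
    by blast
qed

lemma in_L2_tilde: "in_L2 (tilde p n)"
  using integrable_comp_res[of "\<lambda>k. (p n k)\<^sup>2" n] by (simp add: in_L2_def tilde_def[abs_def])

lemma H1_term_nonneg:
  assumes "\<And>k. k < 2^n \<Longrightarrow> 0 < r n k"
  shows "0 \<le> H1_term r p n"
  unfolding H1_term_def using assms by (intro sum_nonneg divide_nonneg_pos) auto

lemma integral_tilde_increment_sq_le:
  assumes r_pos: "\<And>k. k < 2^Suc n \<Longrightarrow> 0 < r (Suc n) k"
  shows "(\<integral>x. (tilde p (Suc n) x - tilde p n x)\<^sup>2 \<partial>haar_Z2)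
    \<le> (1 / 2^Suc n * Max (r (Suc n) ` {..<2^Suc n})) * H1_term r p (Suc n)"
proof -
  define M where "M = Max (r (Suc n) ` {..<2^Suc n})"
  define \<delta> where "\<delta> k = p (Suc n) k - p n (k mod 2^n)" for k
  have "(\<integral>x. (tilde p (Suc n) x - tilde p n x)\<^sup>2 \<partial>haar_Z2) = (\<integral>x. (\<delta> (res (Suc n) x))\<^sup>2 \<partial>haar_Z2)"
    by (simp add: tilde_def \<delta>_def res_Suc_mod)
  also have "\<dots> = (\<Sum>k<2^Suc n. (\<delta> k)\<^sup>2) / 2^Suc n"
    by (rule integral_comp_res)
  also have "\<dots> \<le> (\<Sum>k<2^Suc n. M * ((\<delta> k)\<^sup>2 / r (Suc n) k)) / 2^Suc n"
  proof (intro divide_right_mono sum_mono)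
    fix k assume "k \<in> {..<(2::nat)^Suc n}"
    then have "0 < r (Suc n) k" "r (Suc n) k \<le> M"
      using r_pos unfolding M_def by auto
    then show "(\<delta> k)\<^sup>2 \<le> M * ((\<delta> k)\<^sup>2 / r (Suc n) k)"
      by (simp add: field_simps mult_right_mono)
  qed simp
  also have "\<dots> = (1 / 2^Suc n * M) * H1_term r p (Suc n)"
    by (simp add: H1_term_def \<delta>_def sum_distrib_left sum_divide_distrib mult_ac)
  finally show ?thesis
    unfolding M_def .
qed

lemma gamma0_is_L2_limit:
  assumes "\<exists>f. in_L2 f \<and> L2_converges (tilde p) f"
  shows "in_L2 (gamma0 p)" and "L2_converges (tilde p) (gamma0 p)"
  using someI_ex[OF assms] unfolding gamma0_def by auto

lemma gamma0_AE_eq: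
  assumes "in_L2 f" and "L2_converges (tilde p) f"
  shows "AE x in haar_Z2. gamma0 p x = f x"
proof -
  have "\<exists>f. in_L2 f \<and> L2_converges (tilde p) f"
    using assms by blast
  from gamma0_is_L2_limit[OF this] show ?thesis
    by (intro L2_limit_unique_AE[OF in_L2_tilde _ assms(1) _ assms(2)])
qed

lemma gamma0_lincomb_AE:
  assumes p: "\<exists>f. in_L2 f \<and> L2_converges (tilde p) f" and q: "\<exists>g. in_L2 g \<and> L2_converges (tilde q) g"
  shows "AE x in haar_Z2. gamma0 (\<lambda>n k. a * p n k + b * q n k) x = a * gamma0 p x + b * gamma0 q x"
proof (rule gamma0_AE_eq)
  show "in_L2 (\<lambda>x. a * gamma0 p x + b * gamma0 q x)"
    by (intro in_L2_lincomb gamma0_is_L2_limit p q)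
  have "tilde (\<lambda>n k. a * p n k + b * q n k) = (\<lambda>n x. a * tilde p n x + b * tilde q n x)"
    by (simp add: tilde_def fun_eq_iff)
  then show "L2_converges (tilde (\<lambda>n k. a * p n k + b * q n k)) (\<lambda>x. a * gamma0 p x + b * gamma0 q x)"
    by (simp only:) (intro L2_converges_lincomb in_L2_tilde gamma0_is_L2_limit p q)
qed

lemma Max_resistance_pos:
  fixes r :: "nat \<Rightarrow> nat \<Rightarrow> real"
  assumes r_pos: "\<And>k. k < 2^n \<Longrightarrow> 0 < r n k"
  shows "0 < Max (r n ` {..<2^n})"
proof -
  have "0 < r n 0" by (rule r_pos) simp
  also have "\<dots> \<le> Max (r n ` {..<2^n})" by (rule Max_ge) auto
  finally show ?thesis .
qed

lemma trace_L2_limit_exists: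
  fixes r p :: "nat \<Rightarrow> nat \<Rightarrow> real"
  assumes r_pos: "\<And>n k. n \<ge> 1 \<Longrightarrow> k < 2^n \<Longrightarrow> r n k > 0"
    and summ: "summable (\<lambda>n. (1 / 2^(Suc n)) * Max ((r (Suc n)) ` {..<2^(Suc n)}))"
    and p: "in_H1 r p"
  shows "\<exists>f. in_L2 f \<and> L2_converges (tilde p) f \<and> (\<integral>x. (f x)\<^sup>2 \<partial>haar_Z2)
    \<le> 2 * (p 0 0)\<^sup>2 + 2 * (\<Sum>n. (1 / 2^(Suc n)) * Max ((r (Suc n)) ` {..<2^(Suc n)})) * H1_seminorm_sq r p"
proof -
  have "0 < (1 / 2^(Suc n)) * Max ((r (Suc n)) ` {..<2^(Suc n)})" for n
    using Max_resistance_pos[of "Suc n" r] r_pos by simp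
  moreover have "(\<integral>x. (tilde p (Suc n) x - tilde p n x)\<^sup>2 \<partial>haar_Z2)
      \<le> (1 / 2^Suc n * Max (r (Suc n) ` {..<2^Suc n})) * H1_term r p (Suc n)" for n
    using r_pos by (intro integral_tilde_increment_sq_le) simp
  ultimately have "\<exists>f. in_L2 f \<and> L2_converges (tilde p) f \<and> (\<integral>x. (f x)\<^sup>2 \<partial>haar_Z2)
    \<le> 2 * (\<integral>x. (tilde p 0 x)\<^sup>2 \<partial>haar_Z2)
      + 2 * (\<Sum>n. (1 / 2^(Suc n)) * Max ((r (Suc n)) ` {..<2^(Suc n)})) * (\<Sum>n. H1_term r p (Suc n))"
    using p unfolding in_H1_def by (intro ex_L2_limit_of_weighted_increments in_L2_tilde summ)
  moreover have "(\<integral>x. (tilde p 0 x)\<^sup>2 \<partial>haar_Z2) = (p 0 0)\<^sup>2"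
    using prob_space.prob_space[OF prob_space_haar_Z2] by (simp add: tilde_def res_def)
  ultimately show ?thesis
    unfolding H1_seminorm_sq_def by simp
qed

lemma L2_norm_gamma0_le:
  fixes r p :: "nat \<Rightarrow> nat \<Rightarrow> real"
  assumes r_pos: "\<And>n k. n \<ge> 1 \<Longrightarrow> k < 2^n \<Longrightarrow> r n k > 0"
    and summ: "summable (\<lambda>n. (1 / 2^(Suc n)) * Max ((r (Suc n)) ` {..<2^(Suc n)}))"
    and p: "in_H1 r p"
  shows "L2_norm (gamma0 p)
    \<le> sqrt (2 + 2 * (\<Sum>n. (1 / 2^(Suc n)) * Max ((r (Suc n)) ` {..<2^(Suc n)}))) * H1_norm r p"
proof -
  define A where "A = (\<Sum>n. (1 / 2^(Suc n)) * Max ((r (Suc n)) ` {..<2^(Suc n)}))"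
  define S where "S = H1_seminorm_sq r p"
  obtain f where f: "in_L2 f" "L2_converges (tilde p) f"
    and f_le: "(\<integral>x. (f x)\<^sup>2 \<partial>haar_Z2) \<le> 2 * (p 0 0)\<^sup>2 + 2 * A * S"
    using trace_L2_limit_exists[OF r_pos summ p] unfolding A_def S_def by blast
  have "0 < (1 / 2^(Suc n)) * Max ((r (Suc n)) ` {..<2^(Suc n)})" for n
    using Max_resistance_pos[of "Suc n" r] r_pos by simp
  then have "0 \<le> A"
    unfolding A_def using summ by (intro suminf_nonneg less_imp_le)
  moreover have "0 \<le> S"
    unfolding S_def H1_seminorm_sq_def using p r_pos
    by (intro suminf_nonneg H1_term_nonneg) (simp_all add: in_H1_def)
  ultimately have "0 \<le> 2 * A * (p 0 0)\<^sup>2 + 2 * S"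
    by simp
  then have "2 * (p 0 0)\<^sup>2 + 2 * A * S \<le> (2 + 2 * A) * ((p 0 0)\<^sup>2 + S)"
    by (simp add: algebra_simps)
  moreover have "(\<integral>x. (gamma0 p x)\<^sup>2 \<partial>haar_Z2) = (\<integral>x. (f x)\<^sup>2 \<partial>haar_Z2)"
  proof (rule integral_cong_AE)
    have "in_L2 (gamma0 p)"
      using f by (intro gamma0_is_L2_limit) blast
    with f show "(\<lambda>x. (gamma0 p x)\<^sup>2) \<in> borel_measurable haar_Z2" "(\<lambda>x. (f x)\<^sup>2) \<in> borel_measurable haar_Z2"
      by (simp_all add: in_L2_def borel_measurable_integrable)
    show "AE x in haar_Z2. (gamma0 p x)\<^sup>2 = (f x)\<^sup>2"
      using gamma0_AE_eq[OF f] by eventually_elim simp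
  qed
  ultimately have "(\<integral>x. (gamma0 p x)\<^sup>2 \<partial>haar_Z2) \<le> (2 + 2 * A) * ((p 0 0)\<^sup>2 + S)"
    using f_le by linarith
  then have "sqrt (\<integral>x. (gamma0 p x)\<^sup>2 \<partial>haar_Z2) \<le> sqrt (2 + 2 * A) * sqrt ((p 0 0)\<^sup>2 + S)"
    by (subst real_sqrt_mult[symmetric]) (rule real_sqrt_le_mono)
  then show ?thesis
    unfolding L2_norm_def H1_norm_def A_def S_def .
qed

theorem proposition2p1:
  fixes r :: "nat \<Rightarrow> nat \<Rightarrow> real"
  assumes r_pos: "\<And>n k. n \<ge> 1 \<Longrightarrow> k < 2^n \<Longrightarrow> r n k > 0"
    and summ: "summable (\<lambda>n. (1 / 2^(Suc n)) * Max ((r (Suc n)) ` {..<2^(Suc n)}))"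
  shows "(\<forall>p. in_H1 r p \<longrightarrow> (\<exists>f. in_L2 f \<and> L2_converges (tilde p) f))
    \<and> (\<forall>p q a b. in_H1 r p \<longrightarrow> in_H1 r q \<longrightarrow>
         (AE x in haar_Z2. gamma0 (\<lambda>n k. a * p n k + b * q n k) x = a * gamma0 p x + b * gamma0 q x))
    \<and> (\<exists>C. \<forall>p. in_H1 r p \<longrightarrow> L2_norm (gamma0 p) \<le> C * H1_norm r p)"
proof -
  have exists: "\<exists>f. in_L2 f \<and> L2_converges (tilde p) f" if "in_H1 r p" for p
    using trace_L2_limit_exists[OF r_pos summ that] by blast
  have bounded: "\<exists>C. \<forall>p. in_H1 r p \<longrightarrow> L2_norm (gamma0 p) \<le> C * H1_norm r p"
    using L2_norm_gamma0_le[OF r_pos summ] by blast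
  show ?thesis
    using exists gamma0_lincomb_AE[OF exists exists] bounded by blast
qed

end
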